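(* For each integer $\lambda$, there are at most finitely many independent Stanley sequences (in root position) with character $\lambda$.
   Context: A set of non-negative integers is 3-free if no three of its elements form an arithmetic progression. For a finite 3-free set $A=\{a_0<\cdots<a_k\}$ of non-negative integers, the Stanley sequence $S(A)=(a_n)_{n\ge0}$ is the increasing sequence with initial terms $a_0,\ldots,a_k$ in which each subsequent $a_{n+1}$ is the smallest integer greater than $a_n$ such that $\{a_0,\ldots,a_{n+1}\}$ is 3-free. Throughout, Stanley sequences are in root position, i.e. $a_0=0$. A Stanley sequence $(a_n)$ is independent with character $\lambda$ if for all sufficiently large $k$: $a_{2^k+i}=a_{2^k}+a_i$ for $0\le i<2^k$, and $a_{2^k}=2a_{2^k-1}-\lambda+1$. *)

theory Defs
  imports Main
begin

definition three_free :: "nat set \<Rightarrow> bool" where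
  "three_free A \<longleftrightarrow>
     (\<forall>x\<in>A. \<forall>y\<in>A. \<forall>z\<in>A. x < y \<and> y < z \<longrightarrow> x + z \<noteq> 2 * y)"

definition stanley_seq_of :: "nat set \<Rightarrow> (nat \<Rightarrow> nat) \<Rightarrow> bool" where
  "stanley_seq_of A a \<longleftrightarrow>
     finite A \<and> A \<noteq> {} \<and> three_free A \<and> strict_mono a \<and>
     a ` {..<card A} = A \<and>
     (\<forall>n. card A - 1 \<le> n \<longrightarrow>
        a (Suc n) = (LEAST m. a n < m \<and> three_free (insert m (a ` {..n}))))"

definition root_stanley :: "(nat \<Rightarrow> nat) \<Rightarrow> bool" where
  "root_stanley a \<longleftrightarrow> (\<exists>A. stanley_seq_of A a) \<and> a 0 = 0"

definition independent_with_char :: "(nat \<Rightarrow> nat) \<Rightarrow> int \<Rightarrow> bool" where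
  "independent_with_char a lam \<longleftrightarrow>
     (\<exists>K. \<forall>k\<ge>K.
        (\<forall>i<2^k. a (2^k + i) = a (2^k) + a i) \<and>
        int (a (2^k)) = 2 * int (a (2^k - 1)) - lam + 1)"

end

theory Submission
  imports Defs
begin

text \<open>Once a Stanley sequence has stopped prescribing its terms, each term is the greedy
  choice, so the sequence is determined by its terms up to the last non-greedy one.
  For an independent sequence of character \<lambda> that term is at most 2\<lambda>: a candidate m
  skipped in a non-greedy gap is translated by D = a(2^k) into a greedy gap at block k,
  where it must close a progression x + (D + m) = 2y; independence forces y into the
  first block, and then the relation a(2^k) = 2 a(2^k - 1) - \<lambda> + 1 gives m < \<lambda>.
  Hence only finitely many prefixes, and so finitely many sequences, are possible.\<close>

definition stanley_next :: "(nat \<Rightarrow> nat) \<Rightarrow> nat \<Rightarrow> nat" where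
  "stanley_next a n = (LEAST m. a n < m \<and> three_free (insert m (a ` {..n})))"

definition greedy_from :: "(nat \<Rightarrow> nat) \<Rightarrow> nat \<Rightarrow> bool" where
  "greedy_from a N \<longleftrightarrow> (\<forall>n\<ge>N. a (Suc n) = stanley_next a n)"

lemma three_free_subset: "three_free B \<Longrightarrow> C \<subseteq> B \<Longrightarrow> three_free C"
  unfolding three_free_def by blast

lemma three_free_insert_greater:
  assumes "three_free X" "\<forall>x\<in>X. x < m" "\<not> three_free (insert m X)"
  shows "\<exists>x\<in>X. \<exists>y\<in>X. x < y \<and> x + m = 2 * y"
proof -
  from assms(3) obtain x y z where xyz: "x \<in> insert m X" "y \<in> insert m X" "z \<in> insert m X"
    "x < y" "y < z" "x + z = 2 * y"
    unfolding three_free_def by blast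
  have "z = m"
  proof (rule ccontr)
    assume "z \<noteq> m"
    then have "z \<in> X" using xyz(3) by simp
    then have "x \<in> X" "y \<in> X" using xyz assms(2) by auto
    then show False using assms(1) xyz \<open>z \<in> X\<close> unfolding three_free_def by blast
  qed
  then have "x \<in> X" "y \<in> X"
    using xyz by auto
  then show ?thesis
    using xyz \<open>z = m\<close> by blast
qed

lemma three_free_insert_Suc_double:
  assumes "three_free X" "\<forall>x\<in>X. x \<le> b"
  shows "three_free (insert (2 * b + 1) X)"
  unfolding three_free_def
proof (intro ballI impI)
  fix x y z
  assume xyz: "x \<in> insert (2 * b + 1) X" "y \<in> insert (2 * b + 1) X" "z \<in> insert (2 * b + 1) X"
    "x < y \<and> y < z"
  show "x + z \<noteq> 2 * y"
  proof (cases "z = 2 * b + 1")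
    case True
    then have "y \<le> b" using xyz assms(2) by auto
    then show ?thesis using True by linarith
  next
    case False
    then have "x \<in> X" "y \<in> X" "z \<in> X" using xyz assms(2) by auto
    then show ?thesis using assms(1) xyz unfolding three_free_def by blast
  qed
qed

lemma strict_mono_image_atMost_le:
  fixes a :: "nat \<Rightarrow> nat"
  assumes "strict_mono a" "x \<in> a ` {..n}"
  shows "x \<le> a n"
proof -
  obtain i where "i \<le> n" "x = a i"
    using assms(2) by blast
  then show ?thesis
    using assms(1) by (simp add: strict_mono_less_eq)
qed

lemma strict_mono_prefix_bounded:
  fixes a :: "nat \<Rightarrow> nat"
  assumes "strict_mono a" "a N \<le> L"
  shows "N \<le> L" "\<forall>i\<le>N. a i \<le> L"
proof -
  show "N \<le> L"
    using assms strict_mono_imp_increasing[of a N] by linarith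
  have "\<forall>i\<le>N. a i \<le> a N"
    using assms(1) by (simp add: strict_mono_less_eq)
  then show "\<forall>i\<le>N. a i \<le> L"
    using assms(2) le_trans by blast
qed

lemma stanley_next_le:
  assumes "a n < m" "three_free (insert m (a ` {..n}))"
  shows "stanley_next a n \<le> m"
  unfolding stanley_next_def by (rule Least_le) (use assms in blast)

lemma stanley_next_greater_three_free:
  assumes "strict_mono a" "three_free (a ` {..n})"
  shows "a n < stanley_next a n \<and> three_free (insert (stanley_next a n) (a ` {..n}))"
proof -
  have "a n < 2 * a n + 1 \<and> three_free (insert (2 * a n + 1) (a ` {..n}))"
    using three_free_insert_Suc_double[OF assms(2)] strict_mono_image_atMost_le[OF assms(1)] by auto
  then show ?thesis
    unfolding stanley_next_def by (rule LeastI)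
qed

lemma prefix_insert_progression:
  fixes a :: "nat \<Rightarrow> nat"
  assumes mono: "strict_mono a" and tf: "three_free (a ` {..n})"
    and above: "a n < m" and not_tf: "\<not> three_free (insert m (a ` {..n}))"
  shows "\<exists>x\<in>a ` {..n}. \<exists>y\<in>a ` {..n}. x < y \<and> x + m = 2 * y"
proof -
  have "\<forall>x\<in>a ` {..n}. x < m"
    using strict_mono_image_atMost_le[OF mono] above by fastforce
  then show ?thesis
    using three_free_insert_greater[OF tf _ not_tf] by blast
qed

lemma greedy_gap_progression:
  assumes mono: "strict_mono a" and tf: "three_free (a ` {..n})"
    and greedy: "a (Suc n) = stanley_next a n"
    and gap: "a n < m" "m < a (Suc n)"
  shows "\<exists>x\<in>a ` {..n}. \<exists>y\<in>a ` {..n}. x < y \<and> x + m = 2 * y"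
proof -
  have "\<not> (a n < m \<and> three_free (insert m (a ` {..n})))"
    using gap(2) greedy unfolding stanley_next_def by (intro not_less_Least) simp
  then show ?thesis
    using prefix_insert_progression[OF mono tf gap(1)] gap(1) by blast
qed

lemma greedy_from_Suc_iff:
  "greedy_from a p \<longleftrightarrow> a (Suc p) = stanley_next a p \<and> greedy_from a (Suc p)"
  unfolding greedy_from_def by (auto simp: Suc_le_eq dest: le_imp_less_or_eq)

lemma greedy_from_eqI:
  assumes "greedy_from a N" "greedy_from b N" "\<forall>i\<le>N. a i = b i"
  shows "a = b"
proof
  fix n
  show "a n = b n"
  proof (induction n rule: less_induct)
    case (less n)
    show ?case
    proof (cases "n \<le> N")
      case True
      then show ?thesis using assms(3) by blast
    next
      case False
      then obtain n' where n': "n = Suc n'" "N \<le> n'"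
        by (metis Suc_le_D not_less_eq_eq)
      have "a ` {..n'} = b ` {..n'}" "a n' = b n'"
        using less n' by (auto intro: image_cong)
      then have "stanley_next a n' = stanley_next b n'"
        unfolding stanley_next_def by simp
      then show ?thesis
        using assms(1,2) n' unfolding greedy_from_def by simp
    qed
  qed
qed

lemma finite_greedy_from_bounded_prefix:
  "finite {a. greedy_from a N \<and> (\<forall>i\<le>N. a i \<le> L)}"
proof -
  let ?S = "{a. greedy_from a N \<and> (\<forall>i\<le>N. a i \<le> L)}"
  let ?prefix = "\<lambda>a. map a [0..<Suc N]"
  have "inj_on ?prefix ?S"
  proof (rule inj_onI)
    fix a b assume "a \<in> ?S" "b \<in> ?S" "?prefix a = ?prefix b"
    then show "a = b"
      by (intro greedy_from_eqI[of a N b]) (auto simp: map_eq_conv simp del: upt_Suc)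
  qed
  moreover have "?prefix ` ?S \<subseteq> {xs. set xs \<subseteq> {..L} \<and> length xs = Suc N}"
    by auto
  then have "finite (?prefix ` ?S)"
    by (rule finite_subset) (rule finite_lists_length_eq, simp)
  ultimately show ?thesis
    using finite_imageD by blast
qed

lemma stanley_seq_of_strict_mono: "stanley_seq_of A a \<Longrightarrow> strict_mono a"
  unfolding stanley_seq_of_def by blast

lemma stanley_seq_of_greedy_from: "stanley_seq_of A a \<Longrightarrow> greedy_from a (card A - 1)"
  unfolding stanley_seq_of_def greedy_from_def stanley_next_def by blast

lemma stanley_seq_of_three_free_prefix:
  assumes st: "stanley_seq_of A a"
  shows "three_free (a ` {..n})"
proof (induction n)
  case 0
  have "0 < card A"
    using st unfolding stanley_seq_of_def by auto
  then have "a ` {..0} \<subseteq> A"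
    using st unfolding stanley_seq_of_def by auto
  then show ?case
    using st three_free_subset unfolding stanley_seq_of_def by blast
next
  case (Suc n)
  show ?case
  proof (cases "Suc n < card A")
    case True
    then have "a ` {..Suc n} \<subseteq> A"
      using st unfolding stanley_seq_of_def by auto
    then show ?thesis
      using st three_free_subset unfolding stanley_seq_of_def by blast
  next
    case False
    then have "a (Suc n) = stanley_next a n"
      using stanley_seq_of_greedy_from[OF st] unfolding greedy_from_def by simp
    then show ?thesis
      using stanley_next_greater_three_free[OF stanley_seq_of_strict_mono[OF st] Suc.IH]
      by (simp add: atMost_Suc)
  qed
qed

lemma stanley_seq_of_three_free_range:
  assumes "stanley_seq_of A a"
  shows "three_free (range a)"
  unfolding three_free_def
proof (intro ballI impI)
  fix x y z assume "x \<in> range a" "y \<in> range a" "z \<in> range a" "x < y \<and> y < z"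
  then obtain i j l where "x = a i" "y = a j" "z = a l"
    by blast
  then have "x \<in> a ` {..i + j + l}" "y \<in> a ` {..i + j + l}" "z \<in> a ` {..i + j + l}"
    by auto
  then show "x + z \<noteq> 2 * y"
    using stanley_seq_of_three_free_prefix[OF assms] \<open>x < y \<and> y < z\<close>
    unfolding three_free_def by blast
qed

lemma block_gap_below_character:
  assumes mono: "strict_mono a" and tf: "three_free (range a)"
    and block: "\<forall>i<2^k. a (2^k + i) = a (2^k) + a i"
    and char: "int (a (2^k)) = 2 * int (a (2^k - 1)) - lam + 1"
    and greedy: "a (Suc (2^k + p)) = stanley_next a (2^k + p)"
    and long: "Suc p < 2^k"
    and large: "int (a (Suc p)) + lam \<le> int (a (2^k - 1))"
    and gap: "a p < m" "m < a (Suc p)"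
    and tf_m: "three_free (insert m (a ` {..p}))"
  shows "int m < lam"
proof -
  define D M where "D = a (2^k)" and "M = a (2^k - 1)"
  have shift: "a (2^k + i) = D + a i" if "i < 2^k" for i
    using block that unfolding D_def by blast
  have le_M: "a i \<le> M" if "i < 2^k" for i
    using mono that unfolding M_def by (simp add: strict_mono_less_eq)
  have "a (2^k + p) < D + m" "D + m < a (Suc (2^k + p))"
    using gap shift[of p] shift[of "Suc p"] long by auto
  then obtain i j where ij: "i \<le> 2^k + p" "j \<le> 2^k + p" "a i < a j" "a i + (D + m) = 2 * a j"
    using greedy_gap_progression[OF mono three_free_subset[OF tf] greedy] by blast
  have "j < 2^k"
  proof (rule ccontr)
    assume "\<not> j < 2^k"
    define j' where "j' = j - 2^k"
    have j': "j = 2^k + j'" "j' \<le> p"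
      using \<open>\<not> j < 2^k\<close> ij(2) unfolding j'_def by auto
    then have aj: "a j = D + a j'"
      using shift long by simp
    show False
    proof (cases "i < 2^k")
      case True
      \<comment> \<open>then D \<le> a i + m \<le> M + m, contradicting the character relation since M is large\<close>
      then show False
        using le_M[of i] ij(4) aj char large gap(2) unfolding D_def M_def by linarith
    next
      case False
      define i' where "i' = i - 2^k"
      have "i = 2^k + i'" "i' \<le> p"
        using False ij(1) unfolding i'_def by auto
      then have "a i = D + a i'"
        using shift long by simp
      then have "a i' < a j'" "a i' + m = 2 * a j'"
        using ij(3,4) aj by simp_all
      moreover have "a j' < m"
        using strict_mono_image_atMost_le[OF mono, of "a j'" p] j'(2) gap(1) by auto
      moreover have "a i' \<in> insert m (a ` {..p})" "a j' \<in> insert m (a ` {..p})"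
        using \<open>i' \<le> p\<close> j'(2) by auto
      ultimately show False
        using tf_m unfolding three_free_def by blast
    qed
  qed
  then have "D + m \<le> 2 * M"
    using le_M[of j] ij(4) by linarith
  then show ?thesis
    using char unfolding D_def M_def by linarith
qed

lemma gap_below_character:
  assumes mono: "strict_mono a" and tf: "three_free (range a)"
    and indep: "independent_with_char a lam"
    and greedy: "greedy_from a (Suc p)"
    and gap: "a p < m" "m < a (Suc p)"
    and tf_m: "three_free (insert m (a ` {..p}))"
  shows "int m < lam"
proof -
  obtain K where K: "\<forall>k\<ge>K. (\<forall>i<2^k. a (2^k + i) = a (2^k) + a i) \<and>
      int (a (2^k)) = 2 * int (a (2^k - 1)) - lam + 1"
    using indep unfolding independent_with_char_def by blast
  define c where "c = a (Suc p) + nat lam + p + 2"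
  define k where "k = K + c"
  have "c < 2^c"
    by (rule less_exp)
  also have "\<dots> \<le> 2^k"
    unfolding k_def by (rule power_increasing) auto
  finally have "c < 2^k" .
  moreover have "2^k - 1 \<le> a (2^k - 1)"
    using strict_mono_imp_increasing[OF mono] by blast
  ultimately have "Suc p < 2^k" "int (a (Suc p)) + lam \<le> int (a (2^k - 1))"
    unfolding c_def by linarith+
  moreover have "a (Suc (2^k + p)) = stanley_next a (2^k + p)"
    using greedy unfolding greedy_from_def by simp
  moreover have "K \<le> k"
    unfolding k_def by simp
  ultimately show ?thesis
    using block_gap_below_character[OF mono tf _ _ _ _ _ gap tf_m] K by blast
qed

lemma last_nongreedy_term_bounded:
  assumes mono: "strict_mono a" and tf: "three_free (range a)"
    and indep: "independent_with_char a lam"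
    and greedy: "greedy_from a (Suc p)"
    and nongreedy: "a (Suc p) \<noteq> stanley_next a p"
  shows "int (a (Suc p)) \<le> 2 * lam"
proof -
  have tf_p: "three_free (a ` {..p})"
    by (rule three_free_subset[OF tf]) auto
  have "a p < a (Suc p)"
    using mono by (simp add: strict_mono_Suc_iff)
  moreover have "three_free (insert (a (Suc p)) (a ` {..p}))"
    by (rule three_free_subset[OF tf]) auto
  ultimately have "stanley_next a p \<le> a (Suc p)"
    by (rule stanley_next_le)
  then have next_less: "stanley_next a p < a (Suc p)"
    using nongreedy by simp
  note next_facts = stanley_next_greater_three_free[OF mono tf_p]
  have next_lt: "int (stanley_next a p) < lam"
    using gap_below_character[OF mono tf indep greedy _ next_less] next_facts by blast
  define m where "m = a (Suc p) - 1"
  have m: "a p < m" "m < a (Suc p)"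
    using next_facts next_less unfolding m_def by linarith+
  have "int m < 2 * lam"
  proof (cases "three_free (insert m (a ` {..p}))")
    case True
    then show ?thesis
      using gap_below_character[OF mono tf indep greedy m] next_lt by linarith
  next
    case False
    \<comment> \<open>m then closes a progression x + m = 2y inside the prefix, so m \<le> 2 a p\<close>
    then obtain x y where "y \<in> a ` {..p}" "x + m = 2 * y"
      using prefix_insert_progression[OF mono tf_p m(1)] by blast
    then have "m \<le> 2 * a p"
      using strict_mono_image_atMost_le[OF mono, of y p] by linarith
    then show ?thesis
      using next_facts next_lt by linarith
  qed
  then show ?thesis
    unfolding m_def using m by linarith
qed

lemma independent_stanley_greedy_prefix_bounded:
  assumes st: "stanley_seq_of A a" and a0: "a 0 = 0"
    and indep: "independent_with_char a lam"
  shows "\<exists>N. greedy_from a N \<and> a N \<le> nat (2 * lam)"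
proof -
  define N where "N = (LEAST N. greedy_from a N)"
  have greedy: "greedy_from a N"
    using stanley_seq_of_greedy_from[OF st] unfolding N_def by (rule LeastI)
  have "a N \<le> nat (2 * lam)"
  proof (cases N)
    case 0
    then show ?thesis using a0 by simp
  next
    case (Suc p)
    have "N \<le> p" if "greedy_from a p"
      unfolding N_def using that by (rule Least_le)
    then have "\<not> greedy_from a p"
      using Suc by auto
    then have "a (Suc p) \<noteq> stanley_next a p"
      using greedy Suc greedy_from_Suc_iff by blast
    with greedy Suc have "int (a N) \<le> 2 * lam"
      using last_nongreedy_term_bounded[OF stanley_seq_of_strict_mono[OF st]
          stanley_seq_of_three_free_range[OF st] indep] by simp
    then show ?thesis
      by linarith
  qed
  then show ?thesis
    using greedy by blast
qed

theorem mainTheorem12: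
  fixes lam :: int
  shows "finite {a :: nat \<Rightarrow> nat. root_stanley a \<and> independent_with_char a lam}"
proof -
  define L where "L = nat (2 * lam)"
  have "{a. root_stanley a \<and> independent_with_char a lam}
      \<subseteq> (\<Union>N\<le>L. {a. greedy_from a N \<and> (\<forall>i\<le>N. a i \<le> L)})"
  proof
    fix a assume "a \<in> {a. root_stanley a \<and> independent_with_char a lam}"
    then obtain A where st: "stanley_seq_of A a" and "a 0 = 0" "independent_with_char a lam"
      unfolding root_stanley_def by blast
    then obtain N where N: "greedy_from a N" "a N \<le> L"
      using independent_stanley_greedy_prefix_bounded unfolding L_def by blast
    moreover note strict_mono_prefix_bounded[OF stanley_seq_of_strict_mono[OF st] N(2)]
    ultimately show "a \<in> (\<Union>N\<le>L. {a. greedy_from a N \<and> (\<forall>i\<le>N. a i \<le> L)})"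
      by blast
  qed
  then show ?thesis
    by (rule finite_subset) (simp add: finite_greedy_from_bounded_prefix)
qed

end
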